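(* Let $G$, $k\ge 3$, the choice strings $c_{i,j}$ ($1\le i<j\le k$), the template string $t$, $L$ and $d$ be as in the binary construction described in the context. If $G$ has a clique of size $k$, then there is a string $s\in\{0,1\}^L$ such that every choice string $c_{i,j}$ has a substring $s_{i,j}$ of length $L$ with $d_H(s,s_{i,j})\le d$, and $d_H(s,t)\le d$.
   Context: Let $G=(V,E)$ be an undirected simple graph with $V=\{v_1,\dots,v_n\}$ and edge set $E=\{e_1,\dots,e_m\}$, and let $k\ge 3$ be an integer; put $N=\binom{k}{2}$ and $b=nk-2k+2$. All strings are over $\{0,1\}$. For $1\le p\le n$ let $\mathrm{number}(p)=0^{p-1}10^{n-p}$. Let $\mathrm{front\_tag}=(1^{3nk}0)^{nk}$ (length $(3nk+1)nk$). Order the pairs $(i,j)$, $1\le i<j\le k$, lexicographically and let $i'$ be the position of $(i,j)$ in this order. For an edge $e$ joining $v_r,v_s$ with $r<s$ let $\mathrm{encode}(i,j,e)=(0^n)^{i-1}\,\mathrm{number}(r)\,(0^n)^{j-i-1}\,\mathrm{number}(s)\,(0^n)^{k-j}$ (length $nk$; its $k$ consecutive length-$n$ pieces are called sections), $\mathrm{back\_tag}(i')=0^{(i'-1)b}1^{b}0^{(N-i')b}$, and $\mathrm{block}(i,j,e)=\mathrm{front\_tag}\,\mathrm{encode}(i,j,e)\,\mathrm{back\_tag}(i')$. The choice string is $c_{i,j}=\mathrm{block}(i,j,e_1)\mathrm{block}(i,j,e_2)\cdots\mathrm{block}(i,j,e_m)$. The template string is $t=\mathrm{front\_tag}\,1^{nk}\,0^{Nb}$.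 Set $L=(3nk+1)nk+nk+Nb$ and $d=nk-k$. $d_H$ denotes Hamming distance. *)

theory Defs
  imports Main "HOL-Library.Sublist"
begin

text \<open>Binary strings are bool lists (True = 1, False = 0).
 Graph: vertices v_1..v_n are the numbers 1..n; the edge list E = [e_1,...,e_m]
 lists each edge {v_r,v_s} once as the pair (r,s) with r < s.\<close>

definition zeros :: "nat \<Rightarrow> bool list" where
  "zeros l = replicate l False"

definition number :: "nat \<Rightarrow> nat \<Rightarrow> bool list" where
  "number n p = zeros (p - 1) @ [True] @ zeros (n - p)"

definition front_tag :: "nat \<Rightarrow> nat \<Rightarrow> bool list" where
  "front_tag n k = concat (replicate (n * k) (replicate (3 * n * k) True @ [False]))"

definition bpar :: "nat \<Rightarrow> nat \<Rightarrow> nat" where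
  "bpar n k = n * k - 2 * k + 2"

definition Npairs :: "nat \<Rightarrow> nat" where
  "Npairs k = k choose 2"

definition pair_list :: "nat \<Rightarrow> (nat \<times> nat) list" where
  "pair_list k = concat (map (\<lambda>i. map (\<lambda>j. (i, j)) [i+1..<k+1]) [1..<k+1])"

definition pair_pos :: "nat \<Rightarrow> nat \<Rightarrow> nat \<Rightarrow> nat" where
  "pair_pos k i j = length (takeWhile (\<lambda>q. q \<noteq> (i, j)) (pair_list k)) + 1"

definition encode :: "nat \<Rightarrow> nat \<Rightarrow> nat \<Rightarrow> nat \<Rightarrow> nat \<times> nat \<Rightarrow> bool list" where
  "encode n k i j e = (case e of (r, s) \<Rightarrow>
     concat (replicate (i - 1) (zeros n)) @ number n r @
     concat (replicate (j - i - 1) (zeros n)) @ number n s @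
     concat (replicate (k - j) (zeros n)))"

definition back_tag :: "nat \<Rightarrow> nat \<Rightarrow> nat \<Rightarrow> bool list" where
  "back_tag n k ip = zeros ((ip - 1) * bpar n k) @ replicate (bpar n k) True
                     @ zeros ((Npairs k - ip) * bpar n k)"

definition block :: "nat \<Rightarrow> nat \<Rightarrow> nat \<Rightarrow> nat \<Rightarrow> nat \<times> nat \<Rightarrow> bool list" where
  "block n k i j e = front_tag n k @ encode n k i j e @ back_tag n k (pair_pos k i j)"

definition choice_string :: "nat \<Rightarrow> nat \<Rightarrow> (nat \<times> nat) list \<Rightarrow> nat \<Rightarrow> nat \<Rightarrow> bool list" where
  "choice_string n k E i j = concat (map (block n k i j) E)"

definition template :: "nat \<Rightarrow> nat \<Rightarrow> bool list" where
  "template n k = front_tag n k @ replicate (n * k) True @ zeros (Npairs k * bpar n k)"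

definition Lpar :: "nat \<Rightarrow> nat \<Rightarrow> nat" where
  "Lpar n k = (3 * n * k + 1) * n * k + n * k + Npairs k * bpar n k"

definition dpar :: "nat \<Rightarrow> nat \<Rightarrow> nat" where
  "dpar n k = n * k - k"

text \<open>Hamming distance (used only for strings of equal length).\<close>
definition hamming :: "bool list \<Rightarrow> bool list \<Rightarrow> nat" where
  "hamming xs ys = card {p. p < length xs \<and> p < length ys \<and> xs ! p \<noteq> ys ! p}"

definition adjacent :: "(nat \<times> nat) list \<Rightarrow> nat \<Rightarrow> nat \<Rightarrow> bool" where
  "adjacent E u v = ((u, v) \<in> set E \<or> (v, u) \<in> set E)"

definition has_clique :: "nat \<Rightarrow> (nat \<times> nat) list \<Rightarrow> nat \<Rightarrow> bool" where
  "has_clique n E k = (\<exists>K. K \<subseteq> {1..n} \<and> card K = k \<and>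
      (\<forall>u\<in>K. \<forall>v\<in>K. u \<noteq> v \<longrightarrow> adjacent E u v))"

end

theory Submission
  imports Defs
begin

text \<open>Enumerate a clique as u_1 < ... < u_k and let s be the template with its all-ones
 middle part replaced by number(u_1) ... number(u_k). Each of these k sections differs from
 1^n in n - 1 places, so d_H(s, t) = k(n - 1) = d. In c_{i,j} take the block of the edge
 (u_i, u_j): the front tags agree, its encoding agrees with s in sections i and j and differs
 in one place in each of the other k - 2 sections, and its back tag contributes b ones
 against the zeros of s; in total k - 2 + b = nk - k = d.\<close>

lemma hamming_conv_zip:
  "hamming xs ys = length (filter (\<lambda>(a, b). a \<noteq> b) (zip xs ys))"
  unfolding hamming_def length_filter_conv_card by (rule arg_cong[where f = card]) auto

lemma hamming_Cons [simp]:
  "hamming (x # xs) (y # ys) = (if x = y then 0 else 1) + hamming xs ys"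
  by (simp add: hamming_conv_zip)

lemma hamming_append:
  "length xs = length ys \<Longrightarrow> hamming (xs @ xs') (ys @ ys') = hamming xs ys + hamming xs' ys'"
  by (simp add: hamming_conv_zip)

lemma hamming_self [simp]: "hamming xs xs = 0"
  by (simp add: hamming_def)

lemma hamming_replicate:
  "hamming (replicate m a) (replicate m b) = (if a = b then 0 else m)"
  by (induction m) (auto simp: hamming_conv_zip)

lemma sum_diff_atLeastAtMost: "(\<Sum>i=1..k. k - i) = k choose 2"
proof (induction k)
  case (Suc k)
  have "(\<Sum>i=1..Suc k. Suc k - i) = (\<Sum>i=1..k. (k - i) + 1)"
    by (simp add: sum.cl_ivl_Suc Suc_diff_le)
  also have "\<dots> = (\<Sum>i=1..k. k - i) + (\<Sum>i=1..k. 1)"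
    by (rule sum.distrib)
  also have "\<dots> = (k choose 2) + k"
    by (simp only: Suc.IH) simp
  finally show ?case by (simp add: numeral_2_eq_2)
qed simp

lemma length_pair_list: "length (pair_list k) = Npairs k"
proof -
  have "length (pair_list k) = (\<Sum>i\<leftarrow>[1..<k+1]. k - i)"
    unfolding pair_list_def length_concat map_map by (simp add: comp_def del: upt_Suc)
  also have "\<dots> = (\<Sum>i=1..k. k - i)"
    by (simp only: sum_set_upt_conv_sum_list_nat[symmetric] set_upt
        atLeastLessThanSuc_atLeastAtMost Suc_eq_plus1[symmetric])
  finally show ?thesis
    unfolding Npairs_def sum_diff_atLeastAtMost .
qed

lemma length_takeWhile_neq_less:
  "x \<in> set xs \<Longrightarrow> length (takeWhile (\<lambda>q. q \<noteq> x) xs) < length xs"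
  by (induction xs) auto

lemma pair_pos_le_Npairs:
  assumes "1 \<le> i" "i < j" "j \<le> k"
  shows "pair_pos k i j \<le> Npairs k"
proof -
  have "(i, j) \<in> set (pair_list k)"
    using assms by (auto simp: pair_list_def simp del: upt_Suc intro!: bexI[of _ i])
  then have "length (takeWhile (\<lambda>q. q \<noteq> (i, j)) (pair_list k)) < length (pair_list k)"
    by (rule length_takeWhile_neq_less)
  then show ?thesis
    by (simp add: pair_pos_def length_pair_list)
qed

lemma replicate_split_at:
  "1 \<le> p \<Longrightarrow> p \<le> n \<Longrightarrow> replicate n c = replicate (p - 1) c @ [c] @ replicate (n - p) c"
  by (simp flip: replicate_add replicate_Suc)

lemma length_zeros [simp]: "length (zeros l) = l"
  by (simp add: zeros_def)

lemma length_number: "1 \<le> p \<Longrightarrow> p \<le> n \<Longrightarrow> length (number n p) = n"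
  by (simp add: number_def)

lemma hamming_number_zeros: "1 \<le> p \<Longrightarrow> p \<le> n \<Longrightarrow> hamming (number n p) (zeros n) = 1"
  unfolding number_def zeros_def
  by (subst replicate_split_at[of p n]) (simp_all add: hamming_append hamming_replicate)

lemma hamming_number_ones: "1 \<le> p \<Longrightarrow> p \<le> n \<Longrightarrow> hamming (number n p) (replicate n True) = n - 1"
  unfolding number_def zeros_def
  by (subst replicate_split_at[of p n]) (simp_all add: hamming_append hamming_replicate)

lemma length_concat_numbers:
  "\<forall>v\<in>set vs. v \<in> {1..n} \<Longrightarrow> length (concat (map (number n) vs)) = length vs * n"
  by (induction vs) (auto simp: length_number)

lemma hamming_concat_numbers_zeros:
  "\<forall>v\<in>set vs. v \<in> {1..n} \<Longrightarrow>
   hamming (concat (map (number n) vs)) (concat (replicate (length vs) (zeros n))) = length vs"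
  by (induction vs) (auto simp: hamming_append hamming_number_zeros length_number)

lemma hamming_concat_numbers_ones:
  "\<forall>v\<in>set vs. v \<in> {1..n} \<Longrightarrow>
   hamming (concat (map (number n) vs)) (replicate (length vs * n) True) = length vs * (n - 1)"
proof (induction vs)
  case (Cons v vs)
  have "replicate (length (v # vs) * n) True = replicate n True @ replicate (length vs * n) True"
    by (simp add: replicate_add)
  with Cons show ?case
    by (simp add: hamming_append hamming_number_ones length_number)
qed simp

lemma length_front_tag: "length (front_tag n k) = (3 * n * k + 1) * n * k"
  by (simp add: front_tag_def length_concat sum_list_replicate algebra_simps)

lemma length_encode:
  assumes "1 \<le> i" "i < j" "j \<le> k" "r \<in> {1..n}" "s \<in> {1..n}"
  shows "length (encode n k i j (r, s)) = k * n"
proof -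
  have "length (encode n k i j (r, s)) = (i - 1) * n + n + (j - i - 1) * n + n + (k - j) * n"
    using assms by (simp add: encode_def length_concat sum_list_replicate length_number)
  also have "\<dots> = ((i - 1) + 1 + (j - i - 1) + 1 + (k - j)) * n"
    by (simp only: add_mult_distrib mult_1_left)
  also have "\<dots> = k * n"
    using assms by simp
  finally show ?thesis .
qed

lemma upt_append_upt: "i \<le> j \<Longrightarrow> j \<le> k \<Longrightarrow> [i..<j] @ [j..<k] = [i..<k]"
  using upt_add_eq_append[of i j "k - j"] by simp

lemma hamming_concat_numbers_encode:
  assumes "1 \<le> i" "i < j" "j \<le> k" and u: "\<forall>l\<in>{1..k}. u l \<in> {1..n}"
  shows "hamming (concat (map (number n) (map u [1..<k+1]))) (encode n k i j (u i, u j)) = k - 2"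
proof -
  define as bs cs where "as = map u [1..<i]" and "bs = map u [i+1..<j]" and "cs = map u [j+1..<k+1]"
  have "[1..<k+1] = [1..<i] @ [i..<j] @ [j..<k+1]"
    using assms by (simp add: upt_append_upt del: upt_Suc)
  moreover have "[i..<j] = i # [i+1..<j]" and "[j..<k+1] = j # [j+1..<k+1]"
    using assms by (simp_all add: upt_conv_Cons del: upt_Suc)
  ultimately have split: "map u [1..<k+1] = as @ u i # bs @ u j # cs"
    by (simp add: as_def bs_def cs_def del: upt_Suc)
  have lengths: "length as = i - 1" "length bs = j - i - 1" "length cs = k - j"
    by (simp_all add: as_def bs_def cs_def del: upt_Suc)
  have ranges: "\<forall>v\<in>set as. v \<in> {1..n}" "\<forall>v\<in>set bs. v \<in> {1..n}"
      "\<forall>v\<in>set cs. v \<in> {1..n}" "u i \<in> {1..n}" "u j \<in> {1..n}"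
    using u assms by (auto simp: as_def bs_def cs_def)
  have "length (concat (replicate m (zeros n))) = m * n" for m
    by (simp add: length_concat sum_list_replicate)
  with ranges have "hamming (concat (map (number n) (as @ u i # bs @ u j # cs)))
      (encode n k i j (u i, u j)) = length as + length bs + length cs"
    unfolding encode_def lengths[symmetric]
    by (simp add: hamming_append hamming_concat_numbers_zeros length_concat_numbers length_number)
  then show ?thesis
    unfolding split using assms by (simp add: lengths)
qed

lemma zeros_split_at_block:
  assumes "1 \<le> ip" "ip \<le> N"
  shows "zeros (N * b) = zeros ((ip - 1) * b) @ replicate b False @ zeros ((N - ip) * b)"
proof -
  have "(ip - 1) * b + b + (N - ip) * b = ((ip - 1) + 1 + (N - ip)) * b"
    by (simp only: add_mult_distrib mult_1_left)
  also have "\<dots> = N * b"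
    using assms by simp
  finally show ?thesis
    by (simp add: zeros_def flip: replicate_add)
qed

lemma length_back_tag:
  "1 \<le> ip \<Longrightarrow> ip \<le> Npairs k \<Longrightarrow> length (back_tag n k ip) = Npairs k * bpar n k"
  using arg_cong[OF zeros_split_at_block, of ip "Npairs k" length "bpar n k"]
  by (simp add: back_tag_def)

lemma hamming_zeros_back_tag:
  "1 \<le> ip \<Longrightarrow> ip \<le> Npairs k \<Longrightarrow>
   hamming (zeros (Npairs k * bpar n k)) (back_tag n k ip) = bpar n k"
  by (simp add: zeros_split_at_block back_tag_def hamming_append hamming_replicate)

lemma block_sublist_choice_string:
  "e \<in> set E \<Longrightarrow> sublist (block n k i j e) (choice_string n k E i j)"
  by (auto simp: choice_string_def dest: split_list)

lemma has_cliqueE: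
  assumes "has_clique n E k" and "\<forall>(r, s)\<in>set E. r < s"
  obtains u where "\<forall>l\<in>{1..k}. u l \<in> {1..n}"
    and "\<And>i j. 1 \<le> i \<Longrightarrow> i < j \<Longrightarrow> j \<le> k \<Longrightarrow> (u i, u j) \<in> set E"
proof -
  obtain K where K: "K \<subseteq> {1..n}" "card K = k"
    and adj: "\<forall>v\<in>K. \<forall>w\<in>K. v \<noteq> w \<longrightarrow> adjacent E v w"
    using assms(1) unfolding has_clique_def by blast
  define vs where "vs = sorted_list_of_set K"
  have "finite K"
    using K(1) finite_subset by blast
  then have vs: "set vs = K" "length vs = k" "sorted_wrt (<) vs"
    using K(2) by (simp_all add: vs_def)
  define u where "u l = vs ! (l - 1)" for l
  have uK: "u l \<in> K" if "l \<in> {1..k}" for l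
  proof -
    have "l - 1 < length vs"
      using that vs by auto
    then show ?thesis
      unfolding u_def using vs(1) nth_mem by blast
  qed
  show thesis
  proof
    show "\<forall>l\<in>{1..k}. u l \<in> {1..n}"
      using uK K(1) by blast
  next
    fix i j assume ij: "1 \<le> i" "i < j" "j \<le> k"
    then have "u i < u j"
      unfolding u_def using vs by (simp add: sorted_wrt_nth_less)
    moreover have "adjacent E (u i) (u j)"
      using adj uK[of i] uK[of j] ij \<open>u i < u j\<close> by simp
    ultimately show "(u i, u j) \<in> set E"
      using assms(2) unfolding adjacent_def by fastforce
  qed
qed

lemma length_block:
  assumes "1 \<le> i" "i < j" "j \<le> k" "r \<in> {1..n}" "s \<in> {1..n}"
  shows "length (block n k i j (r, s)) = Lpar n k"
  using assms pair_pos_le_Npairs[of i j k]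
  by (simp add: block_def Lpar_def length_front_tag length_encode length_back_tag pair_pos_def)

definition clique_center :: "nat \<Rightarrow> nat \<Rightarrow> nat list \<Rightarrow> bool list" where
  "clique_center n k vs = front_tag n k @ concat (map (number n) vs) @ zeros (Npairs k * bpar n k)"

lemma length_clique_center:
  "\<forall>v\<in>set vs. v \<in> {1..n} \<Longrightarrow> length vs = k \<Longrightarrow> length (clique_center n k vs) = Lpar n k"
  by (simp add: clique_center_def Lpar_def length_front_tag length_concat_numbers)

lemma hamming_clique_center_template:
  assumes "\<forall>v\<in>set vs. v \<in> {1..n}" "length vs = k"
  shows "hamming (clique_center n k vs) (template n k) = dpar n k"
proof -
  have "hamming (concat (map (number n) vs)) (replicate (n * k) True) = k * (n - 1)"
    using hamming_concat_numbers_ones[OF assms(1)] assms(2) by (simp add: mult.commute)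
  then show ?thesis
    using assms
    by (simp add: clique_center_def template_def dpar_def hamming_append length_concat_numbers
        right_diff_distrib' mult.commute)
qed

lemma hamming_clique_center_block:
  assumes "1 \<le> i" "i < j" "j \<le> k" and u: "\<forall>l\<in>{1..k}. u l \<in> {1..n}"
  shows "hamming (clique_center n k (map u [1..<k+1])) (block n k i j (u i, u j)) = k - 2 + bpar n k"
proof -
  have ip: "1 \<le> pair_pos k i j" "pair_pos k i j \<le> Npairs k"
    using pair_pos_le_Npairs[OF assms(1-3)] by (simp_all add: pair_pos_def)
  have vs: "\<forall>v\<in>set (map u [1..<k+1]). v \<in> {1..n}" "length (map u [1..<k+1]) = k"
    using u by auto
  have "hamming (clique_center n k (map u [1..<k+1])) (block n k i j (u i, u j))
      = hamming (concat (map (number n) (map u [1..<k+1]))) (encode n k i j (u i, u j))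
        + hamming (zeros (Npairs k * bpar n k)) (back_tag n k (pair_pos k i j))"
    unfolding clique_center_def block_def
    using assms vs ip length_concat_numbers[OF vs(1)]
    by (simp add: hamming_append length_encode length_back_tag del: upt_Suc)
  then show ?thesis
    by (simp only: hamming_concat_numbers_encode[OF assms] hamming_zeros_back_tag[OF ip])
qed

theorem proposition3:
  fixes n k :: nat and E :: "(nat \<times> nat) list"
  assumes "k \<ge> 3"
    and "distinct E"
    and "\<forall>(r, s) \<in> set E. 1 \<le> r \<and> r < s \<and> s \<le> n"
    and "has_clique n E k"
  shows "\<exists>s :: bool list. length s = Lpar n k \<and>
           (\<forall>i j. 1 \<le> i \<and> i < j \<and> j \<le> k \<longrightarrow>
              (\<exists>sij. sublist sij (choice_string n k E i j) \<and> length sij = Lpar n k \<and>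
                     hamming s sij \<le> dpar n k)) \<and>
           hamming s (template n k) \<le> dpar n k"
proof -
  have "\<forall>(r, s)\<in>set E. r < s"
    using assms(3) by auto
  then obtain u where u: "\<forall>l\<in>{1..k}. u l \<in> {1..n}"
    and edges: "\<And>i j. 1 \<le> i \<Longrightarrow> i < j \<Longrightarrow> j \<le> k \<Longrightarrow> (u i, u j) \<in> set E"
    using has_cliqueE[OF assms(4)] by blast
  define s where "s = clique_center n k (map u [1..<k+1])"
  have vs: "\<forall>v\<in>set (map u [1..<k+1]). v \<in> {1..n}" "length (map u [1..<k+1]) = k"
    using u by auto
  have "(u 1, u 2) \<in> set E"
    using edges assms(1) by simp
  then have "2 * k \<le> n * k"
    using assms(3) by auto
  then have distance: "k - 2 + bpar n k = dpar n k"
    using assms(1) unfolding bpar_def dpar_def by arith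
  have "\<exists>sij. sublist sij (choice_string n k E i j) \<and> length sij = Lpar n k \<and>
      hamming s sij \<le> dpar n k" if ij: "1 \<le> i" "i < j" "j \<le> k" for i j
  proof (intro exI conjI)
    show "sublist (block n k i j (u i, u j)) (choice_string n k E i j)"
      by (rule block_sublist_choice_string[OF edges[OF ij]])
    show "length (block n k i j (u i, u j)) = Lpar n k"
      using u ij by (simp add: length_block)
    show "hamming s (block n k i j (u i, u j)) \<le> dpar n k"
      unfolding s_def hamming_clique_center_block[OF ij u] distance ..
  qed
  then show ?thesis
    using length_clique_center[OF vs] hamming_clique_center_template[OF vs]
    unfolding s_def by auto
qed

end
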